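(* In the truncated sparse linear regression model of the context, assume (A1), (A4) and (RE). There exists $\kappa\ge\Omega(\alpha^4\beta)$ (absolute implied constant) such that for every $\vec{\Omega}\in\mathbb{R}^d$ for which $\vec{\Delta}=\vec{\Omega}-\vec{\Omega}^*$ satisfies (i) $\|\vec{\Delta}\|_2\le\frac{1}{C\sqrt k}$ and (ii) $\|\vec{\Delta}_{\overline{K}}\|_1\le3\|\vec{\Delta}_K\|_1$, it holds that \[ \vec{\Delta}^\top\nabla^2l_n(\vec{\Omega})\vec{\Delta}\ge\kappa\|\vec{\Delta}\|_2^2 . \]
   Context: $S\subseteq\mathbb{R}$ measurable with indicator $S(\cdot)$. Fixed row vectors $\vec{x}^{(1)},\dots,\vec{x}^{(n)}\in\mathbb{R}^d$ are the rows of $\vec{X}\in\mathbb{R}^{n\times d}$. $\vec{\Omega}^*\in\mathbb{R}^d$ has support $K$, $|K|=k$, $\overline{K}=[d]\setminus K$; $\vec{\Delta}_K,\vec{\Delta}_{\overline{K}}$ are restrictions. Responses $y^{(i)}\sim\mathcal{N}(\vec{x}^{(i)}\vec{\Omega}^*,1)$ conditioned on $S$. $l_n(\vec{\Omega})=\frac1n\sum_{i=1}^n\left(\frac12{y^{(i)}}^2-y^{(i)}\vec{x}^{(i)}\vec{\Omega}+\log\int\exp\left(-\frac12z^2+z\,\vec{x}^{(i)}\vec{\Omega}\right)S(z)dz\right)$. $\alpha(\vec{\Omega},\vec{x})=\Pr_{y\sim\mathcal{N}(\vec{x}\vec{\Omega},1)}[y\in S]$. (A1): $\alpha(\vec{\Omega}^*,\vec{x}^{(i)})\ge\alpha>0$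 for all $i$; (A4): $\max_{i,j}|X_{ij}|\le C$; (RE): there is $\beta>0$ with $\frac1n\|\vec{X}\vec{\Delta}\|_2^2\ge\beta\|\vec{\Delta}\|_2^2$ whenever $\|\vec{\Delta}_{\overline{K}}\|_1\le3\|\vec{\Delta}_K\|_1$. *)

theory Defs
  imports "HOL-Probability.Probability"
begin

text \<open>Vectors in R^d are represented as functions nat => real, only indices j < d matter.
  The design matrix X is represented as X i j (row i < n, column j < d).\<close>

definition row_dot :: "nat \<Rightarrow> (nat \<Rightarrow> nat \<Rightarrow> real) \<Rightarrow> nat \<Rightarrow> (nat \<Rightarrow> real) \<Rightarrow> real" where
  "row_dot d X i w = (\<Sum>j<d. X i j * w j)"

definition l2norm :: "nat \<Rightarrow> (nat \<Rightarrow> real) \<Rightarrow> real" where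
  "l2norm d v = sqrt (\<Sum>j<d. (v j)\<^sup>2)"

definition l1norm_on :: "nat set \<Rightarrow> (nat \<Rightarrow> real) \<Rightarrow> real" where
  "l1norm_on A v = (\<Sum>j\<in>A. \<bar>v j\<bar>)"

text \<open>Negative log-likelihood l_n of the truncated linear regression model.\<close>
definition trunc_loss ::
  "real set \<Rightarrow> nat \<Rightarrow> nat \<Rightarrow> (nat \<Rightarrow> nat \<Rightarrow> real) \<Rightarrow> (nat \<Rightarrow> real) \<Rightarrow> (nat \<Rightarrow> real) \<Rightarrow> real" where
  "trunc_loss S n d X y \<Omega> =
     (1 / real n) * (\<Sum>i<n. (1/2) * (y i)\<^sup>2 - y i * row_dot d X i \<Omega>
        + ln (LINT z|lborel. exp (-(1/2) * z\<^sup>2 + z * row_dot d X i \<Omega>) * indicator S z))"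

text \<open>Quadratic form of the Hessian: Delta^T (Hessian of f at Omega) Delta,
  i.e. the second derivative of t |-> f (Omega + t Delta) at t = 0.\<close>
definition hess_quad :: "((nat \<Rightarrow> real) \<Rightarrow> real) \<Rightarrow> (nat \<Rightarrow> real) \<Rightarrow> (nat \<Rightarrow> real) \<Rightarrow> real" where
  "hess_quad f \<Omega> \<Delta> = deriv (deriv (\<lambda>t. f (\<lambda>j. \<Omega> j + t * \<Delta> j))) 0"

definition surv_mass :: "real set \<Rightarrow> real \<Rightarrow> real" where
  "surv_mass S \<mu> = measure (density lborel (normal_density \<mu> 1)) S"

definition RE_cond :: "nat \<Rightarrow> nat \<Rightarrow> (nat \<Rightarrow> nat \<Rightarrow> real) \<Rightarrow> nat set \<Rightarrow> real \<Rightarrow> bool" where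
  "RE_cond n d X K \<beta> \<longleftrightarrow>
     (\<forall>\<Delta>. l1norm_on ({..<d} - K) \<Delta> \<le> 3 * l1norm_on K \<Delta> \<longrightarrow>
        (1 / real n) * (\<Sum>i<n. (row_dot d X i \<Delta>)\<^sup>2) \<ge> \<beta> * (l2norm d \<Delta>)\<^sup>2)"

end

theory Submission
  imports Defs
begin

text \<open>Along the line \<Omega> + t\<Delta> the loss is an average of log-partition functions
  ln \<integral>_S exp(-z^2/2 + z m) dz evaluated at m = x_i\<Omega>, whose second derivative in m
  is the variance of N(m,1) conditioned on S. Hence the Hessian quadratic form is
  (1/n) \<Sigma>_i Var_i (x_i\<Delta>)^2. Conditions (i), (ii) and (A4) give |x_i\<Delta>| \<le> 4.
  If N(\<mu>,1) gives S mass P, then N(\<mu>+\<delta>,1) gives it mass at least P^2 exp(-\<delta>^2)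
  (Cauchy-Schwarz), so S keeps mass at least \<alpha>^2 exp(-16) at every m = x_i\<Omega>.
  If S has mass P under N(m,1), the conditioned density is at most 1/(\<surd>(2\<pi>) P),
  which forces variance at least \<pi> P^2/16. The restricted eigenvalue condition turns
  (1/n) \<Sigma>_i (x_i\<Delta>)^2 into \<beta> \<parallel>\<Delta>\<parallel>^2.\<close>

section \<open>Truncated Gaussian moments and their derivatives\<close>

lemma integral_dominated_convergence_at:
  fixes s :: "'i::first_countable_topology \<Rightarrow> 'a \<Rightarrow> real" and f :: "'a \<Rightarrow> real"
  assumes "f \<in> borel_measurable M" "\<And>t. s t \<in> borel_measurable M" "integrable M w"
    and lim: "AE x in M. ((\<lambda>t. s t x) \<longlongrightarrow> f x) (at a)"
    and bound: "\<forall>\<^sub>F t in at a. AE x in M. norm (s t x) \<le> w x"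
  shows "((\<lambda>t. integral\<^sup>L M (s t)) \<longlongrightarrow> integral\<^sup>L M f) (at a)"
proof (subst tendsto_at_iff_sequentially, intro allI impI)
  fix X :: "nat \<Rightarrow> 'i"
  assume "\<forall>i. X i \<in> UNIV - {a}" "X \<longlonglongrightarrow> a"
  then have X: "filterlim X (at a) sequentially"
    by (intro filterlim_atI) auto
  from filterlim_iff[THEN iffD1, OF X, rule_format, OF bound]
  obtain N where w: "\<And>n. N \<le> n \<Longrightarrow> AE x in M. norm (s (X n) x) \<le> w x"
    by (auto simp: eventually_sequentially)
  show "((\<lambda>t. integral\<^sup>L M (s t)) \<circ> X) \<longlonglongrightarrow> integral\<^sup>L M f"
    unfolding comp_def
  proof (rule LIMSEQ_offset, rule integral_dominated_convergence)
    show "AE x in M. norm (s (X (n + N)) x) \<le> w x" for n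
      by (rule w) auto
    show "AE x in M. (\<lambda>n. s (X (n + N)) x) \<longlonglongrightarrow> f x"
      using lim by eventually_elim (intro LIMSEQ_ignore_initial_segment filterlim_compose[OF _ X])
  qed fact+
qed

text \<open>The integrand of the log-partition function in the loss. It is left unnormalised so that
  the derivative of its k-th moment over S in the mean parameter is the (k+1)-st moment.\<close>

definition gauss_weight :: "real \<Rightarrow> real \<Rightarrow> real" where
  "gauss_weight m z = exp (-(1/2) * z\<^sup>2 + z * m)"

lemma gauss_weight_pos [simp]: "gauss_weight m z > 0"
  by (simp add: gauss_weight_def)

lemma gauss_weight_nonneg [simp]: "0 \<le> gauss_weight m z"
  using gauss_weight_pos[of m z] by linarith

lemma borel_measurable_gauss_weight [measurable]: "gauss_weight m \<in> borel_measurable borel"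
  unfolding gauss_weight_def by measurable

lemma gauss_weight_eq_normal_density:
  "gauss_weight m z = sqrt (2 * pi) * exp (m\<^sup>2 / 2) * normal_density m 1 z"
proof -
  have "exp (m\<^sup>2 / 2) * exp (-(z - m)\<^sup>2 / 2) = gauss_weight m z"
    unfolding gauss_weight_def exp_add[symmetric]
    by (rule arg_cong[where f = exp]) (simp add: power2_eq_square field_simps)
  then show ?thesis
    unfolding normal_density_def by (simp add: field_simps)
qed

lemma gauss_weight_le: "gauss_weight m z \<le> exp (m\<^sup>2 / 2)"
proof -
  have "-(1/2) * z\<^sup>2 + z * m \<le> m\<^sup>2 / 2"
    using zero_le_power2[of "z - m"] by (simp add: power2_eq_square algebra_simps)
  then show ?thesis
    unfolding gauss_weight_def by simp
qed

lemma gauss_weight_shift: "gauss_weight (m + h) z = gauss_weight m z * exp (z * h)"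
  unfolding gauss_weight_def exp_add[symmetric] by (simp add: algebra_simps)

lemma integrable_gauss_weight: "integrable lborel (gauss_weight m)"
  unfolding gauss_weight_eq_normal_density by (intro integrable_mult_right) simp

lemma abs_power_le_fact_exp: "\<bar>z::real\<bar> ^ k \<le> fact k * exp \<bar>z\<bar>"
proof -
  have exp_sums: "(\<lambda>n. \<bar>z\<bar> ^ n /\<^sub>R fact n) sums exp \<bar>z\<bar>"
    by (rule exp_converges)
  have "\<bar>z\<bar> ^ k /\<^sub>R fact k \<le> (\<Sum>n<Suc k. \<bar>z\<bar> ^ n /\<^sub>R fact n)"
    by (rule member_le_sum) auto
  also have "\<dots> \<le> exp \<bar>z\<bar>"
    using sum_le_suminf[OF sums_summable[OF exp_sums], of "{..<Suc k}"] sums_unique[OF exp_sums]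
    by simp
  finally show ?thesis
    by (simp add: field_simps)
qed

lemma integrable_abs_power_exp_gauss_weight:
  "integrable lborel (\<lambda>z. \<bar>z\<bar> ^ k * exp (b * \<bar>z\<bar>) * gauss_weight m z)"
proof (rule Bochner_Integration.integrable_bound)
  let ?c = "\<bar>b\<bar> + 1"
  show "integrable lborel (\<lambda>z. fact k * (gauss_weight (m + ?c) z + gauss_weight (m - ?c) z))"
    by (intro integrable_mult_right Bochner_Integration.integrable_add integrable_gauss_weight)
  show "(\<lambda>z. \<bar>z\<bar> ^ k * exp (b * \<bar>z\<bar>) * gauss_weight m z) \<in> borel_measurable lborel"
    by measurable
  show "AE z in lborel. norm (\<bar>z\<bar> ^ k * exp (b * \<bar>z\<bar>) * gauss_weight m z)
      \<le> norm (fact k * (gauss_weight (m + ?c) z + gauss_weight (m - ?c) z))"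
  proof (rule AE_I2)
    fix z :: real
    have "exp (?c * \<bar>z\<bar>) * gauss_weight m z \<in> {gauss_weight (m + ?c) z, gauss_weight (m - ?c) z}"
      unfolding gauss_weight_def mult_exp_exp by (cases "z \<ge> 0") (simp_all add: algebra_simps)
    then have shifted: "exp (?c * \<bar>z\<bar>) * gauss_weight m z
        \<le> gauss_weight (m + ?c) z + gauss_weight (m - ?c) z"
      by auto
    have "\<bar>z\<bar> ^ k * exp (b * \<bar>z\<bar>) \<le> fact k * exp \<bar>z\<bar> * exp (\<bar>b\<bar> * \<bar>z\<bar>)"
      by (intro mult_mono abs_power_le_fact_exp) (auto intro: mult_right_mono)
    also have "\<dots> = fact k * exp (?c * \<bar>z\<bar>)"
      by (simp add: exp_add[symmetric] algebra_simps)
    finally have "\<bar>z\<bar> ^ k * exp (b * \<bar>z\<bar>) * gauss_weight m z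
        \<le> fact k * (exp (?c * \<bar>z\<bar>) * gauss_weight m z)"
      by (simp add: mult_right_mono)
    also have "\<dots> \<le> fact k * (gauss_weight (m + ?c) z + gauss_weight (m - ?c) z)"
      using shifted by (intro mult_left_mono) auto
    finally show "norm (\<bar>z\<bar> ^ k * exp (b * \<bar>z\<bar>) * gauss_weight m z)
        \<le> norm (fact k * (gauss_weight (m + ?c) z + gauss_weight (m - ?c) z))"
      by (simp add: add_pos_pos less_imp_le)
  qed
qed

lemma abs_exp_minus_one_le:
  fixes x :: real
  shows "\<bar>exp x - 1\<bar> \<le> \<bar>x\<bar> * exp \<bar>x\<bar>"
proof (cases "x \<ge> 0")
  case True
  have "(1 - x) * exp x \<le> exp (-x) * exp x"
    using exp_ge_add_one_self[of "-x"] by (intro mult_right_mono) auto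
  then show ?thesis
    using True by (simp add: algebra_simps exp_minus_inverse)
next
  case False
  then have "\<bar>exp x - 1\<bar> = 1 - exp x"
    by simp
  also have "\<dots> \<le> \<bar>x\<bar>"
    using exp_ge_add_one_self[of x] False by linarith
  also have "\<dots> \<le> \<bar>x\<bar> * exp \<bar>x\<bar>"
    by (simp add: mult_le_cancel_left1)
  finally show ?thesis .
qed

lemma abs_exp_difference_quotient_le:
  fixes z h :: real
  assumes "\<bar>h\<bar> \<le> 1"
  shows "\<bar>(exp (z * h) - 1) / h\<bar> \<le> \<bar>z\<bar> * exp \<bar>z\<bar>"
proof -
  have "\<bar>exp (z * h) - 1\<bar> \<le> \<bar>z * h\<bar> * exp \<bar>z * h\<bar>"
    by (rule abs_exp_minus_one_le)
  also have "\<dots> \<le> \<bar>h\<bar> * (\<bar>z\<bar> * exp \<bar>z\<bar>)"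
  proof -
    have "exp \<bar>z * h\<bar> \<le> exp \<bar>z\<bar>"
      using assms by (simp add: abs_mult mult_left_le)
    then have "\<bar>z * h\<bar> * exp \<bar>z * h\<bar> \<le> \<bar>z * h\<bar> * exp \<bar>z\<bar>"
      by (intro mult_left_mono) auto
    then show ?thesis
      by (simp add: abs_mult mult_ac)
  qed
  finally show ?thesis
    by (cases "h = 0") (simp_all add: abs_divide pos_divide_le_eq mult.commute)
qed

definition trunc_moment :: "real set \<Rightarrow> nat \<Rightarrow> real \<Rightarrow> real" where
  "trunc_moment S k m = (LINT z|lborel. z ^ k * gauss_weight m z * indicator S z)"

lemma integrable_trunc_moment:
  assumes "S \<in> sets lborel"
  shows "integrable lborel (\<lambda>z. z ^ k * gauss_weight m z * indicator S z)"
proof (rule Bochner_Integration.integrable_bound)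
  show "integrable lborel (\<lambda>z. \<bar>z\<bar> ^ k * exp (0 * \<bar>z\<bar>) * gauss_weight m z)"
    by (rule integrable_abs_power_exp_gauss_weight)
  show "AE z in lborel. norm (z ^ k * gauss_weight m z * indicator S z)
      \<le> norm (\<bar>z\<bar> ^ k * exp (0 * \<bar>z\<bar>) * gauss_weight m z)"
    by (intro AE_I2) (simp add: indicator_def abs_mult power_abs)
qed (use assms in measurable)

lemma trunc_moment_difference_quotient:
  assumes S: "S \<in> sets lborel"
  shows "(trunc_moment S k (m + h) - trunc_moment S k m) / h
    = (LINT z|lborel. z ^ k * gauss_weight m z * ((exp (z * h) - 1) / h) * indicator S z)"
proof -
  have "(trunc_moment S k (m + h) - trunc_moment S k m) / h
      = (LINT z|lborel. (z ^ k * gauss_weight (m + h) z * indicator S z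
          - z ^ k * gauss_weight m z * indicator S z) / h)"
    unfolding trunc_moment_def using integrable_trunc_moment[OF S] by simp
  then show ?thesis
    unfolding gauss_weight_shift by (simp add: field_simps diff_divide_distrib)
qed

lemma trunc_moment_has_real_derivative:
  assumes S: "S \<in> sets lborel"
  shows "(trunc_moment S k has_real_derivative trunc_moment S (Suc k) m) (at m)"
proof -
  define q where "q h z = z ^ k * gauss_weight m z * ((exp (z * h) - 1) / h) * indicator S z" for h z
  have "((\<lambda>h. LINT z|lborel. q h z) \<longlongrightarrow> trunc_moment S (Suc k) m) (at 0)"
    unfolding trunc_moment_def
  proof (rule integral_dominated_convergence_at)
    show "integrable lborel (\<lambda>z. \<bar>z\<bar> ^ Suc k * exp (1 * \<bar>z\<bar>) * gauss_weight m z)"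
      by (rule integrable_abs_power_exp_gauss_weight)
    show "q h \<in> borel_measurable lborel" for h
      unfolding q_def using S by measurable
    show "AE z in lborel. ((\<lambda>h. q h z) \<longlongrightarrow> z ^ Suc k * gauss_weight m z * indicator S z) (at 0)"
    proof (rule AE_I2)
      fix z :: real
      have "((\<lambda>h. exp (z * h)) has_real_derivative z) (at 0)"
        by (auto intro!: derivative_eq_intros)
      then have "((\<lambda>h. (exp (z * h) - 1) / h) \<longlongrightarrow> z) (at 0)"
        unfolding DERIV_def by simp
      then have "((\<lambda>h. (z ^ k * gauss_weight m z * indicator S z) * ((exp (z * h) - 1) / h))
          \<longlongrightarrow> (z ^ k * gauss_weight m z * indicator S z) * z) (at 0)"
        by (rule tendsto_mult_left)
      then show "((\<lambda>h. q h z) \<longlongrightarrow> z ^ Suc k * gauss_weight m z * indicator S z) (at 0)"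
        unfolding q_def by (simp add: mult_ac)
    qed
    have "\<forall>\<^sub>F h in at 0. \<bar>h\<bar> \<le> (1::real)"
      by (auto simp: eventually_at intro!: exI[of _ 1])
    then show "\<forall>\<^sub>F h in at 0. AE z in lborel.
        norm (q h z) \<le> \<bar>z\<bar> ^ Suc k * exp (1 * \<bar>z\<bar>) * gauss_weight m z"
    proof eventually_elim
      case (elim h)
      show ?case
      proof (rule AE_I2)
        fix z
        have "norm (q h z) \<le> \<bar>z\<bar> ^ k * gauss_weight m z * \<bar>(exp (z * h) - 1) / h\<bar>"
          unfolding q_def by (simp add: indicator_def abs_mult power_abs)
        also have "\<dots> \<le> \<bar>z\<bar> ^ k * gauss_weight m z * (\<bar>z\<bar> * exp \<bar>z\<bar>)"
          using elim by (intro mult_left_mono abs_exp_difference_quotient_le) auto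
        finally show "norm (q h z) \<le> \<bar>z\<bar> ^ Suc k * exp (1 * \<bar>z\<bar>) * gauss_weight m z"
          by (simp add: mult_ac)
      qed
    qed
  qed (use S in measurable)
  then show ?thesis
    unfolding DERIV_def trunc_moment_difference_quotient[OF S] q_def .
qed

section \<open>Survival mass under a shift of the mean\<close>

lemma surv_mass_eq_integral:
  assumes "S \<in> sets lborel"
  shows "surv_mass S m = (LINT z|lborel. normal_density m 1 z * indicator S z)"
proof -
  have "surv_mass S m = integral\<^sup>L (density lborel (normal_density m 1)) (indicator S)"
    unfolding surv_mass_def by simp
  also have "\<dots> = (LINT z|lborel. normal_density m 1 z *\<^sub>R indicator S z)"
    using assms by (intro integral_density) auto
  finally show ?thesis
    by simp
qed

lemma trunc_moment_0_eq_surv_mass: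
  assumes "S \<in> sets lborel"
  shows "trunc_moment S 0 m = sqrt (2 * pi) * exp (m\<^sup>2 / 2) * surv_mass S m"
  unfolding trunc_moment_def surv_mass_eq_integral[OF assms] gauss_weight_eq_normal_density
  by (simp add: mult.assoc)

lemma normal_density_sq_div:
  "normal_density \<mu> 1 z ^ 2 / normal_density m 1 z
    = exp ((\<mu> - m)\<^sup>2) * normal_density (2 * \<mu> - m) 1 z"
proof -
  have "2 * (-(z - \<mu>)\<^sup>2 / 2) - (-(z - m)\<^sup>2 / 2) = (\<mu> - m)\<^sup>2 + (-(z - (2 * \<mu> - m))\<^sup>2 / 2)"
    by (simp add: power2_eq_square divide_simps) (simp add: algebra_simps)
  then have "exp (-(z - \<mu>)\<^sup>2 / 2) ^ 2 / exp (-(z - m)\<^sup>2 / 2)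
      = exp ((\<mu> - m)\<^sup>2) * exp (-(z - (2 * \<mu> - m))\<^sup>2 / 2)"
    by (metis exp_add exp_diff exp_of_nat_mult of_nat_numeral)
  then show ?thesis
    unfolding normal_density_def by (simp add: power_mult_distrib field_simps)
qed

lemma normal_density_le_am_gm:
  assumes "l > 0"
  shows "normal_density \<mu> 1 z
    \<le> (l * normal_density m 1 z + exp ((\<mu> - m)\<^sup>2) * normal_density (2 * \<mu> - m) 1 z / l) / 2"
proof -
  define A where "A = normal_density m 1 z"
  define B where "B = normal_density \<mu> 1 z"
  have "A > 0"
    unfolding A_def by (rule normal_density_pos) simp
  have "2 * l * A * B \<le> l\<^sup>2 * A\<^sup>2 + B\<^sup>2"
    using zero_le_power2[of "l * A - B"] by (simp add: power2_eq_square algebra_simps)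
  then have "B \<le> (l * A + B\<^sup>2 / A / l) / 2"
    using \<open>A > 0\<close> assms by (simp add: field_simps power2_eq_square)
  then show ?thesis
    unfolding A_def B_def normal_density_sq_div[symmetric] by simp
qed

lemma surv_mass_sq_le:
  assumes S: "S \<in> sets lborel"
  shows "(surv_mass S \<mu>)\<^sup>2 \<le> exp ((\<mu> - m)\<^sup>2) * surv_mass S m"
proof (cases "surv_mass S \<mu> = 0")
  case True
  then show ?thesis
    by (simp add: surv_mass_def)
next
  case False
  define E where "E = exp ((\<mu> - m)\<^sup>2)"
  define P where "P = surv_mass S \<mu>"
  define l where "l = E / P"
  \<comment> \<open>Integrating AM-GM with this weight reproduces Cauchy-Schwarz against the \<chi>^2 factor
    E = \<integral> p_\<mu>^2 / p_m.\<close>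
  have "P > 0"
    using False unfolding P_def surv_mass_def by (simp add: zero_less_measure_iff)
  then have l: "l > 0"
    unfolding l_def E_def by simp
  have am_gm: "normal_density \<mu> 1 z * indicator S z
      \<le> (l * (normal_density m 1 z * indicator S z) + E * normal_density (2 * \<mu> - m) 1 z / l) / 2" for z
    using normal_density_le_am_gm[OF l, of \<mu> z m] l
    unfolding E_def by (cases "z \<in> S") (simp_all add: indicator_def)
  have int_m: "integrable lborel (\<lambda>z. normal_density m 1 z * indicator S z)" for m
    using S by (intro integrable_real_mult_indicator) auto
  have "P \<le> (LINT z|lborel. (l * (normal_density m 1 z * indicator S z)
      + E * normal_density (2 * \<mu> - m) 1 z / l) / 2)"
    unfolding P_def surv_mass_eq_integral[OF S]
    by (rule integral_mono[OF int_m _ am_gm])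
      (auto intro!: integrable_divide Bochner_Integration.integrable_add integrable_mult_right int_m)
  also have "\<dots> = (l * surv_mass S m + E / l) / 2"
    unfolding surv_mass_eq_integral[OF S] using int_m[of m] by simp
  also have "\<dots> = (E * surv_mass S m / P + P) / 2"
    unfolding l_def using \<open>P > 0\<close> by (simp add: E_def)
  finally have "P \<le> E * surv_mass S m / P"
    by simp
  then show ?thesis
    using \<open>P > 0\<close> unfolding P_def E_def by (simp add: field_simps power2_eq_square)
qed

lemma surv_mass_ge_shift:
  assumes S: "S \<in> sets lborel" and "0 \<le> \<alpha>" "\<alpha> \<le> surv_mass S \<mu>"
  shows "\<alpha>\<^sup>2 * exp (-(\<mu> - m)\<^sup>2) \<le> surv_mass S m"
proof -
  have "\<alpha>\<^sup>2 \<le> exp ((\<mu> - m)\<^sup>2) * surv_mass S m"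
    using assms power_mono[of \<alpha> "surv_mass S \<mu>" 2] surv_mass_sq_le[OF S, of \<mu> m] by linarith
  then show ?thesis
    by (simp add: exp_minus field_simps)
qed

lemma trunc_moment_0_pos:
  assumes S: "S \<in> sets lborel" and "surv_mass S \<mu> > 0"
  shows "trunc_moment S 0 m > 0"
proof -
  have "0 < (surv_mass S \<mu>)\<^sup>2 * exp (-(\<mu> - m)\<^sup>2)"
    using assms by simp
  also have "\<dots> \<le> surv_mass S m"
    using assms by (intro surv_mass_ge_shift[OF S]) auto
  finally show ?thesis
    by (simp add: trunc_moment_0_eq_surv_mass[OF S])
qed

section \<open>Variance of a truncated Gaussian\<close>

lemma integral_square_deviation_ge:
  fixes f :: "real \<Rightarrow> real"
  assumes int_f: "integrable lborel f" and int_dev: "integrable lborel (\<lambda>z. (z - \<nu>)\<^sup>2 * f z)"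
    and nonneg: "\<And>z. 0 \<le> f z" and bounded: "\<And>z. f z \<le> M" and r: "0 \<le> r"
  shows "r\<^sup>2 * (integral\<^sup>L lborel f - 2 * r * M) \<le> (LINT z|lborel. (z - \<nu>)\<^sup>2 * f z)"
proof -
  let ?I = "indicator {\<nu> - r..\<nu> + r} :: real \<Rightarrow> real"
  have int_I: "integrable lborel ?I"
    using emeasure_lborel_cbox_finite[of "\<nu> - r" "\<nu> + r"] by (intro integrable_real_indicator) auto
  have "r\<^sup>2 * (f z - M * ?I z) \<le> (z - \<nu>)\<^sup>2 * f z" for z
  proof (cases "\<bar>z - \<nu>\<bar> \<le> r")
    case True
    then have "r\<^sup>2 * (f z - M * ?I z) \<le> 0"
      using bounded[of z] by (simp add: mult_nonneg_nonpos indicator_def abs_le_iff)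
    also have "0 \<le> (z - \<nu>)\<^sup>2 * f z"
      using nonneg[of z] by simp
    finally show ?thesis .
  next
    case False
    then have "?I z = 0"
      by (auto simp: indicator_def abs_le_iff)
    moreover have "r\<^sup>2 \<le> (z - \<nu>)\<^sup>2"
      using False r by (simp add: abs_le_square_iff[symmetric])
    ultimately show ?thesis
      using nonneg[of z] by (simp add: mult_right_mono)
  qed
  then have "(LINT z|lborel. r\<^sup>2 * (f z - M * ?I z)) \<le> (LINT z|lborel. (z - \<nu>)\<^sup>2 * f z)"
    using int_f int_I int_dev by (intro integral_mono) auto
  moreover have "(LINT z|lborel. r\<^sup>2 * (f z - M * ?I z)) = r\<^sup>2 * (integral\<^sup>L lborel f - 2 * r * M)"
    using int_f int_I r by simp
  ultimately show ?thesis
    by (simp only:)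
qed

definition trunc_mean :: "real set \<Rightarrow> real \<Rightarrow> real" where
  "trunc_mean S m = trunc_moment S 1 m / trunc_moment S 0 m"

definition trunc_var :: "real set \<Rightarrow> real \<Rightarrow> real" where
  "trunc_var S m = trunc_moment S 2 m / trunc_moment S 0 m - (trunc_mean S m)\<^sup>2"

lemma trunc_var_ge:
  assumes S: "S \<in> sets lborel" and pos: "trunc_moment S 0 m > 0"
  shows "pi / 16 * (surv_mass S m)\<^sup>2 \<le> trunc_var S m"
proof -
  define Z where "Z k = trunc_moment S k m" for k
  define f where "f z = gauss_weight m z * indicator S z" for z
  define M where "M = exp (m\<^sup>2 / 2)"
  define \<nu> where "\<nu> = Z 1 / Z 0"
  define r where "r = Z 0 / (4 * M)"
  have "Z 0 > 0"
    using pos unfolding Z_def .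
  have int0: "integrable lborel f" and int1: "integrable lborel (\<lambda>z. z * f z)"
    and int2: "integrable lborel (\<lambda>z. z\<^sup>2 * f z)"
    unfolding f_def
    using integrable_trunc_moment[OF S, of 0 m] integrable_trunc_moment[OF S, of 1 m]
      integrable_trunc_moment[OF S, of 2 m]
    by (simp_all add: mult.assoc)
  have Z0: "integral\<^sup>L lborel f = Z 0" and Z1: "(LINT z|lborel. z * f z) = Z 1"
    and Z2: "(LINT z|lborel. z\<^sup>2 * f z) = Z 2"
    unfolding Z_def trunc_moment_def f_def by (simp_all add: mult.assoc)
  have dev: "(z - \<nu>)\<^sup>2 * f z = z\<^sup>2 * f z - 2 * \<nu> * (z * f z) + \<nu>\<^sup>2 * f z" for z
    by (simp add: power2_eq_square algebra_simps)
  have "r\<^sup>2 * (integral\<^sup>L lborel f - 2 * r * M) \<le> (LINT z|lborel. (z - \<nu>)\<^sup>2 * f z)"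
  proof (rule integral_square_deviation_ge)
    show "integrable lborel (\<lambda>z. (z - \<nu>)\<^sup>2 * f z)"
      unfolding dev using int0 int1 int2 by simp
    show "0 \<le> f z" "f z \<le> M" for z
      using gauss_weight_le[of m z] by (auto simp: f_def M_def indicator_def)
    show "0 \<le> r"
      using \<open>Z 0 > 0\<close> by (simp add: r_def M_def)
  qed (fact int0)
  also have "(LINT z|lborel. (z - \<nu>)\<^sup>2 * f z) = Z 2 - 2 * \<nu> * Z 1 + \<nu>\<^sup>2 * Z 0"
    unfolding dev using int0 int1 int2 by (simp add: Z0 Z1 Z2)
  also have "\<dots> = Z 0 * trunc_var S m"
    unfolding trunc_var_def trunc_mean_def Z_def[symmetric] \<nu>_def using \<open>Z 0 > 0\<close>
    by (simp add: field_simps power2_eq_square)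
  finally have "r\<^sup>2 * (Z 0 - 2 * r * M) \<le> Z 0 * trunc_var S m"
    unfolding Z0 .
  moreover have "r\<^sup>2 * (Z 0 - 2 * r * M) = Z 0 * (r\<^sup>2 / 2)"
    unfolding r_def M_def by (simp add: field_simps)
  ultimately have "r\<^sup>2 / 2 \<le> trunc_var S m"
    using \<open>Z 0 > 0\<close> by simp
  moreover have "r\<^sup>2 / 2 = pi / 16 * (surv_mass S m)\<^sup>2"
    unfolding r_def M_def Z_def trunc_moment_0_eq_surv_mass[OF S]
    by (simp add: power_mult_distrib power_divide exp_double[symmetric])
  ultimately show ?thesis
    by simp
qed

lemma trunc_var_ge_shift:
  assumes S: "S \<in> sets lborel" and \<alpha>: "0 \<le> \<alpha>" "\<alpha> \<le> surv_mass S \<mu>"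
    and shift: "\<bar>\<mu> - m\<bar> \<le> \<delta>" and pos: "trunc_moment S 0 m > 0"
  shows "pi / 16 * exp (-2 * \<delta>\<^sup>2) * \<alpha> ^ 4 \<le> trunc_var S m"
proof -
  have "(\<mu> - m)\<^sup>2 \<le> \<delta>\<^sup>2"
    using shift power_mono[of "\<bar>\<mu> - m\<bar>" \<delta> 2] by simp
  then have "\<alpha>\<^sup>2 * exp (-\<delta>\<^sup>2) \<le> \<alpha>\<^sup>2 * exp (-(\<mu> - m)\<^sup>2)"
    by (intro mult_left_mono) auto
  also have "\<dots> \<le> surv_mass S m"
    by (rule surv_mass_ge_shift[OF S \<alpha>])
  finally have "(\<alpha>\<^sup>2 * exp (-\<delta>\<^sup>2))\<^sup>2 \<le> (surv_mass S m)\<^sup>2"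
    by (intro power_mono) auto
  then have "pi / 16 * exp (-2 * \<delta>\<^sup>2) * \<alpha> ^ 4 \<le> pi / 16 * (surv_mass S m)\<^sup>2"
    by (simp add: power_mult_distrib exp_double[symmetric] mult.commute)
  also have "\<dots> \<le> trunc_var S m"
    by (rule trunc_var_ge[OF S pos])
  finally show ?thesis .
qed

section \<open>The Hessian of the loss\<close>

lemma has_real_derivative_ln_trunc_moment_0:
  assumes S: "S \<in> sets lborel" and pos: "trunc_moment S 0 m > 0"
  shows "((\<lambda>m. ln (trunc_moment S 0 m)) has_real_derivative trunc_mean S m) (at m)"
  using DERIV_chain2[OF DERIV_ln[OF pos] trunc_moment_has_real_derivative[OF S, of 0 m]]
  by (simp add: trunc_mean_def field_simps)

lemma has_real_derivative_trunc_mean: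
  assumes S: "S \<in> sets lborel" and pos: "trunc_moment S 0 m > 0"
  shows "(trunc_mean S has_real_derivative trunc_var S m) (at m)"
  using DERIV_divide[OF trunc_moment_has_real_derivative[OF S, of 1 m]
      trunc_moment_has_real_derivative[OF S, of 0 m]] pos
  unfolding trunc_mean_def[abs_def] trunc_var_def trunc_mean_def
  by (simp add: numeral_2_eq_2 power2_eq_square field_simps)

lemma hess_quad_trunc_loss:
  assumes S: "S \<in> sets lborel" and pos: "\<And>m. trunc_moment S 0 m > 0"
  shows "hess_quad (trunc_loss S n d X y) \<Omega> \<Delta>
    = (1 / real n) * (\<Sum>i<n. trunc_var S (row_dot d X i \<Omega>) * (row_dot d X i \<Delta>)\<^sup>2)"
proof -
  define a where "a i = row_dot d X i \<Omega>" for i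
  define b where "b i = row_dot d X i \<Delta>" for i
  have ln_chain: "((\<lambda>t. ln (trunc_moment S 0 (g t))) has_real_derivative E) (at t)"
    if "(g has_real_derivative g') (at t)" "E = trunc_mean S (g t) * g'" for g g' t E
    unfolding that(2) by (rule DERIV_chain2[OF has_real_derivative_ln_trunc_moment_0[OF S pos] that(1)])
  have mean_chain: "((\<lambda>t. trunc_mean S (g t)) has_real_derivative E) (at t)"
    if "(g has_real_derivative g') (at t)" "E = trunc_var S (g t) * g'" for g g' t E
    unfolding that(2) by (rule DERIV_chain2[OF has_real_derivative_trunc_mean[OF S pos] that(1)])
  define F where "F t = (1 / real n) * (\<Sum>i<n. (1/2) * (y i)\<^sup>2 - y i * (a i + t * b i)
      + ln (trunc_moment S 0 (a i + t * b i)))" for t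
  define F' where "F' t = (1 / real n) * (\<Sum>i<n. - (y i * b i) + trunc_mean S (a i + t * b i) * b i)" for t
  define F'' where "F'' t = (1 / real n) * (\<Sum>i<n. trunc_var S (a i + t * b i) * b i * b i)" for t
  have "row_dot d X i (\<lambda>j. \<Omega> j + t * \<Delta> j) = a i + t * b i" for i t
    unfolding a_def b_def row_dot_def by (simp add: algebra_simps sum.distrib sum_distrib_left)
  moreover have "(LINT z|lborel. exp (-(1/2) * z\<^sup>2 + z * m) * indicator S z) = trunc_moment S 0 m" for m
    unfolding trunc_moment_def gauss_weight_def by simp
  ultimately have loss_line: "(\<lambda>t. trunc_loss S n d X y (\<lambda>j. \<Omega> j + t * \<Delta> j)) = F"
    unfolding trunc_loss_def F_def by simp
  have "(F has_real_derivative F' t) (at t)" for t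
    unfolding F_def F'_def
    by (intro DERIV_cmult DERIV_sum) (auto intro!: derivative_eq_intros ln_chain)
  then have "deriv F = F'"
    by (intro ext DERIV_imp_deriv)
  moreover have "(F' has_real_derivative F'' 0) (at 0)"
    unfolding F'_def F''_def
    by (intro DERIV_cmult DERIV_sum) (auto intro!: derivative_eq_intros mean_chain)
  ultimately have "hess_quad (trunc_loss S n d X y) \<Omega> \<Delta> = F'' 0"
    unfolding hess_quad_def loss_line by (simp add: DERIV_imp_deriv)
  then show ?thesis
    unfolding F''_def a_def b_def by (simp add: power2_eq_square mult.assoc)
qed

section \<open>Rows of the design on the restricted cone\<close>

lemma abs_row_dot_le:
  assumes "\<forall>j<d. \<bar>X i j\<bar> \<le> C"
  shows "\<bar>row_dot d X i \<Delta>\<bar> \<le> C * l1norm_on {..<d} \<Delta>"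
proof -
  have "\<bar>row_dot d X i \<Delta>\<bar> \<le> (\<Sum>j<d. \<bar>X i j\<bar> * \<bar>\<Delta> j\<bar>)"
    unfolding row_dot_def abs_mult[symmetric] by (rule sum_abs)
  also have "\<dots> \<le> (\<Sum>j<d. C * \<bar>\<Delta> j\<bar>)"
    using assms by (intro sum_mono mult_right_mono) auto
  finally show ?thesis
    by (simp add: l1norm_on_def sum_distrib_left)
qed

lemma l1norm_on_le_sqrt_card_l2norm:
  assumes "K \<subseteq> {..<d}"
  shows "l1norm_on K \<Delta> \<le> sqrt (card K) * l2norm d \<Delta>"
proof -
  have "(l1norm_on K \<Delta>)\<^sup>2 \<le> (\<Sum>j\<in>K. (\<Delta> j)\<^sup>2) * card K"
    unfolding l1norm_on_def using sum_squared_le_sum_of_squares[of "\<lambda>j. \<bar>\<Delta> j\<bar>" K] by simp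
  also have "\<dots> \<le> (\<Sum>j<d. (\<Delta> j)\<^sup>2) * card K"
    using assms by (intro mult_right_mono sum_mono2) simp_all
  also have "\<dots> = (sqrt (card K) * l2norm d \<Delta>)\<^sup>2"
    unfolding l2norm_def by (simp add: power_mult_distrib sum_nonneg)
  finally show ?thesis
    by (rule power2_le_imp_le) (simp add: l2norm_def sum_nonneg)
qed

lemma abs_row_dot_cone_le:
  assumes K: "K \<subseteq> {..<d}" and C: "C > 0" and X: "\<forall>j<d. \<bar>X i j\<bar> \<le> C"
    and radius: "l2norm d \<Delta> \<le> 1 / (C * sqrt (card K))"
    and cone: "l1norm_on ({..<d} - K) \<Delta> \<le> 3 * l1norm_on K \<Delta>"
  shows "\<bar>row_dot d X i \<Delta>\<bar> \<le> 4"
proof -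
  have "C * sqrt (card K) * l2norm d \<Delta> \<le> 1"
  proof (cases "card K = 0")
    case False
    then show ?thesis
      using radius C by (simp add: le_divide_eq mult.commute)
  qed simp
  have "l1norm_on {..<d} \<Delta> = l1norm_on ({..<d} - K) \<Delta> + l1norm_on K \<Delta>"
    unfolding l1norm_on_def using K by (simp add: sum.subset_diff)
  also have "\<dots> \<le> 4 * (sqrt (card K) * l2norm d \<Delta>)"
    using cone l1norm_on_le_sqrt_card_l2norm[OF K, of \<Delta>] by linarith
  finally have "C * l1norm_on {..<d} \<Delta> \<le> 4 * (C * sqrt (card K) * l2norm d \<Delta>)"
    using C by (simp add: mult_left_mono mult_ac)
  also have "\<dots> \<le> 4"
    using \<open>C * sqrt (card K) * l2norm d \<Delta> \<le> 1\<close> by simp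
  finally show ?thesis
    using abs_row_dot_le[of d X i C \<Delta>] X by simp
qed

lemma hess_quad_trunc_loss_ge:
  assumes S: "S \<in> sets lborel" and n: "n > 0" and K: "K \<subseteq> {..<d}"
    and \<alpha>: "\<alpha> > 0" "\<forall>i<n. surv_mass S (row_dot d X i \<Omega>s) \<ge> \<alpha>"
    and C: "C > 0" "\<forall>i<n. \<forall>j<d. \<bar>X i j\<bar> \<le> C" and RE: "RE_cond n d X K \<beta>"
    and \<Delta>: "\<Delta> = (\<lambda>j. \<Omega> j - \<Omega>s j)"
    and radius: "l2norm d \<Delta> \<le> 1 / (C * sqrt (card K))"
    and cone: "l1norm_on ({..<d} - K) \<Delta> \<le> 3 * l1norm_on K \<Delta>"
  shows "pi * exp (-32) / 16 * \<alpha> ^ 4 * \<beta> * (l2norm d \<Delta>)\<^sup>2 \<le> hess_quad (trunc_loss S n d X y) \<Omega> \<Delta>"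
proof -
  define c where "c = pi * exp (-32) / 16 * \<alpha> ^ 4"
  have pos: "trunc_moment S 0 m > 0" for m
    using \<alpha> n by (intro trunc_moment_0_pos[OF S, of "row_dot d X 0 \<Omega>s"]) auto
  have var: "c \<le> trunc_var S (row_dot d X i \<Omega>)" if "i < n" for i
  proof -
    have "\<bar>row_dot d X i \<Omega>s - row_dot d X i \<Omega>\<bar> = \<bar>row_dot d X i \<Delta>\<bar>"
      unfolding \<Delta> row_dot_def by (simp add: sum_subtractf right_diff_distrib abs_minus_commute)
    also have "\<dots> \<le> 4"
      using C that by (intro abs_row_dot_cone_le[OF K _ _ radius cone]) auto
    finally show ?thesis
      using trunc_var_ge_shift[OF S _ _ _ pos, where \<mu> = "row_dot d X i \<Omega>s" and \<delta> = 4] \<alpha> that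
      unfolding c_def by simp
  qed
  have "\<beta> * (l2norm d \<Delta>)\<^sup>2 \<le> (1 / real n) * (\<Sum>i<n. (row_dot d X i \<Delta>)\<^sup>2)"
    using RE cone unfolding RE_cond_def by blast
  then have "c * (\<beta> * (l2norm d \<Delta>)\<^sup>2) \<le> c * ((1 / real n) * (\<Sum>i<n. (row_dot d X i \<Delta>)\<^sup>2))"
    unfolding c_def by (intro mult_left_mono) auto
  also have "\<dots> = (1 / real n) * (\<Sum>i<n. c * (row_dot d X i \<Delta>)\<^sup>2)"
    by (simp add: sum_distrib_left)
  also have "\<dots> \<le> (1 / real n) * (\<Sum>i<n. trunc_var S (row_dot d X i \<Omega>) * (row_dot d X i \<Delta>)\<^sup>2)"
    using var by (intro mult_left_mono sum_mono mult_right_mono) simp_all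
  also have "\<dots> = hess_quad (trunc_loss S n d X y) \<Omega> \<Delta>"
    by (rule hess_quad_trunc_loss[OF S pos, symmetric])
  finally show ?thesis
    unfolding c_def by (simp add: mult_ac)
qed

theorem lemma17:
  shows "\<exists>c>0. \<forall>(S::real set) (n::nat) (d::nat) (X::nat \<Rightarrow> nat \<Rightarrow> real) (y::nat \<Rightarrow> real)
      (\<Omega>s::nat \<Rightarrow> real) (K::nat set) (\<alpha>::real) (\<beta>::real) (C::real).
     S \<in> sets lborel \<and> n > 0 \<and> K = {j. j < d \<and> \<Omega>s j \<noteq> 0} \<and>
     \<alpha> > 0 \<and> (\<forall>i<n. surv_mass S (row_dot d X i \<Omega>s) \<ge> \<alpha>) \<and>
     C > 0 \<and> (\<forall>i<n. \<forall>j<d. \<bar>X i j\<bar> \<le> C) \<and>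
     \<beta> > 0 \<and> RE_cond n d X K \<beta>
     \<longrightarrow> (\<exists>\<kappa> \<ge> c * \<alpha>^4 * \<beta>. \<forall>\<Omega>::nat \<Rightarrow> real.
            let \<Delta> = (\<lambda>j. \<Omega> j - \<Omega>s j) in
            l2norm d \<Delta> \<le> 1 / (C * sqrt (real (card K))) \<and>
            l1norm_on ({..<d} - K) \<Delta> \<le> 3 * l1norm_on K \<Delta>
            \<longrightarrow> hess_quad (trunc_loss S n d X y) \<Omega> \<Delta> \<ge> \<kappa> * (l2norm d \<Delta>)\<^sup>2)"
proof (rule exI[of _ "pi * exp (-32) / 16"], intro conjI allI impI)
  fix S n d X y \<Omega>s K \<alpha> \<beta> C
  assume "S \<in> sets lborel \<and> n > 0 \<and> K = {j. j < d \<and> \<Omega>s j \<noteq> 0} \<and>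
     \<alpha> > 0 \<and> (\<forall>i<n. surv_mass S (row_dot d X i \<Omega>s) \<ge> \<alpha>) \<and>
     C > 0 \<and> (\<forall>i<n. \<forall>j<d. \<bar>X i j\<bar> \<le> C) \<and> \<beta> > 0 \<and> RE_cond n d X K \<beta>"
  then have S: "S \<in> sets lborel" and n: "n > 0" and K: "K \<subseteq> {..<d}"
    and \<alpha>: "\<alpha> > 0" "\<forall>i<n. surv_mass S (row_dot d X i \<Omega>s) \<ge> \<alpha>"
    and C: "C > 0" "\<forall>i<n. \<forall>j<d. \<bar>X i j\<bar> \<le> C" and RE: "RE_cond n d X K \<beta>"
    by auto
  show "\<exists>\<kappa> \<ge> pi * exp (-32) / 16 * \<alpha>^4 * \<beta>. \<forall>\<Omega>. let \<Delta> = (\<lambda>j. \<Omega> j - \<Omega>s j) in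
      l2norm d \<Delta> \<le> 1 / (C * sqrt (real (card K))) \<and> l1norm_on ({..<d} - K) \<Delta> \<le> 3 * l1norm_on K \<Delta>
      \<longrightarrow> hess_quad (trunc_loss S n d X y) \<Omega> \<Delta> \<ge> \<kappa> * (l2norm d \<Delta>)\<^sup>2"
    unfolding Let_def
    using hess_quad_trunc_loss_ge[OF S n K \<alpha> C RE refl] by blast
qed simp

end
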